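(* Assume that $(R,\mathfrak m)$ is $F$-pure and let $\mathfrak a$ be an ideal of $R$. Then $(0:_E\mathfrak a)\subseteq(\operatorname{ann}_{\Phi(E)}(\mathfrak aR[x,f]))_0$ if and only if $\mathfrak a$ is $\Phi(E)$-special and $(\operatorname{ann}_{\Phi(E)}(\mathfrak aR[x,f]))_0=(0:_E\mathfrak a)$.
   Context: $(R,\mathfrak m)$ is a commutative Noetherian local ring of prime characteristic $p$. $R$ is $F$-pure if for every $R$-module $M$ the map $M\to R^{(1)}\otimes_RM$, $m\mapsto1\otimes m$, is injective ($R^{(1)}$ = $R$ with right structure via $r\mapsto r^p$). The Frobenius skew polynomial ring $R[x,f]$ consists of polynomials $\sum r_ix^i$, free left $R$-module on $(x^i)_{i\ge0}$, with $xr=r^px$; graded with $n$th component $Rx^n$. $E=E_R(R/\mathfrak m)$; $\Phi(E)=R[x,f]\otimes_RE=\bigoplus_nRx^n\otimes_RE$, with $0$th component $R\otimes_RE$ identified with $E$. An ideal is $\Phi(E)$-special if it equals $(0:_RN)$ for some $R[x,f]$-submodule $N$ of $\Phi(E)$. $\operatorname{ann}_{\Phi(E)}(\mathfrak aR[x,f])$ is the $R[x,f]$-submodule of $\Phi(E)$ consisting of elements annihilated by all $rx^n$ with $r\in\mathfrak a$, $n\ge0$, and $(\cdot)_0$ denotes its $0$th component, a submodule of $E$. *)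

theory Defs
  imports Main "HOL-Computational_Algebra.Primes"
begin

definition is_ideal :: "'a::comm_ring_1 set \<Rightarrow> bool" where
  "is_ideal I \<longleftrightarrow> 0 \<in> I \<and> (\<forall>x\<in>I. \<forall>y\<in>I. x + y \<in> I) \<and> (\<forall>r. \<forall>x\<in>I. r * x \<in> I)"

definition noetherian_ring :: "'a::comm_ring_1 itself \<Rightarrow> bool" where
  "noetherian_ring _ \<longleftrightarrow>
     (\<forall>I :: nat \<Rightarrow> 'a set. (\<forall>n. is_ideal (I n)) \<and> (\<forall>n. I n \<subseteq> I (Suc n))
        \<longrightarrow> (\<exists>N. \<forall>n\<ge>N. I n = I N))"

definition local_ring_max :: "'a::comm_ring_1 set \<Rightarrow> bool" where
  "local_ring_max m \<longleftrightarrow> is_ideal m \<and> 1 \<notin> m \<and> (\<forall>x. x \<notin> m \<longrightarrow> (\<exists>y. x * y = 1))"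

definition is_rmodule :: "'c set \<Rightarrow> ('c \<Rightarrow> 'c \<Rightarrow> 'c) \<Rightarrow> 'c \<Rightarrow> ('a::comm_ring_1 \<Rightarrow> 'c \<Rightarrow> 'c) \<Rightarrow> bool" where
  "is_rmodule M add zero smul \<longleftrightarrow>
     zero \<in> M \<and> (\<forall>x\<in>M. \<forall>y\<in>M. add x y \<in> M) \<and> (\<forall>r. \<forall>x\<in>M. smul r x \<in> M) \<and>
     (\<forall>x\<in>M. \<forall>y\<in>M. \<forall>z\<in>M. add (add x y) z = add x (add y z)) \<and>
     (\<forall>x\<in>M. \<forall>y\<in>M. add x y = add y x) \<and>
     (\<forall>x\<in>M. add zero x = x) \<and>
     (\<forall>x\<in>M. \<exists>y\<in>M. add x y = zero) \<and>
     (\<forall>r. \<forall>x\<in>M. \<forall>y\<in>M. smul r (add x y) = add (smul r x) (smul r y)) \<and>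
     (\<forall>r s. \<forall>x\<in>M. smul (r + s) x = add (smul r x) (smul s x)) \<and>
     (\<forall>r s. \<forall>x\<in>M. smul (r * s) x = smul r (smul s x)) \<and>
     (\<forall>x\<in>M. smul 1 x = x)"

definition is_submodule :: "'c set \<Rightarrow> 'c set \<Rightarrow> ('c \<Rightarrow> 'c \<Rightarrow> 'c) \<Rightarrow> 'c \<Rightarrow> ('a::comm_ring_1 \<Rightarrow> 'c \<Rightarrow> 'c) \<Rightarrow> bool" where
  "is_submodule N M add zero smul \<longleftrightarrow>
     N \<subseteq> M \<and> zero \<in> N \<and> (\<forall>x\<in>N. \<forall>y\<in>N. add x y \<in> N) \<and> (\<forall>r. \<forall>x\<in>N. smul r x \<in> N)"

text \<open>Injectivity of a module, via Baer's criterion.\<close>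
definition injective_module :: "'c set \<Rightarrow> ('c \<Rightarrow> 'c \<Rightarrow> 'c) \<Rightarrow> 'c \<Rightarrow> ('a::comm_ring_1 \<Rightarrow> 'c \<Rightarrow> 'c) \<Rightarrow> bool" where
  "injective_module M add zero smul \<longleftrightarrow>
     (\<forall>I g. is_ideal I \<and> (\<forall>x\<in>I. g x \<in> M) \<and> (\<forall>x\<in>I. \<forall>y\<in>I. g (x + y) = add (g x) (g y))
        \<and> (\<forall>r. \<forall>x\<in>I. g (r * x) = smul r (g x))
        \<longrightarrow> (\<exists>e\<in>M. \<forall>x\<in>I. g x = smul x e))"

text \<open>M is an injective hull of R/m: M is injective and is an essential extension of
  a submodule R u \<cong> R/m (i.e. ann u = m).\<close>
definition injective_hull_residue ::
  "'a::comm_ring_1 set \<Rightarrow> 'c set \<Rightarrow> ('c \<Rightarrow> 'c \<Rightarrow> 'c) \<Rightarrow> 'c \<Rightarrow> ('a \<Rightarrow> 'c \<Rightarrow> 'c) \<Rightarrow> bool" where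
  "injective_hull_residue m M add zero smul \<longleftrightarrow>
     injective_module M add zero smul \<and>
     (\<exists>u\<in>M. {r. smul r u = zero} = m \<and>
        (\<forall>N. is_submodule N M add zero smul \<and> N \<noteq> {zero}
             \<longrightarrow> N \<inter> range (\<lambda>r. smul r u) \<noteq> {zero}))"

definition delta :: "'x \<Rightarrow> 'x \<Rightarrow> int" where
  "delta x = (\<lambda>y. if y = x then 1 else 0)"

inductive_set zspan :: "('x \<Rightarrow> int) set \<Rightarrow> ('x \<Rightarrow> int) set" for G where
  zspan_zero: "(\<lambda>_. 0) \<in> zspan G"
| zspan_gen: "g \<in> G \<Longrightarrow> g \<in> zspan G"
| zspan_add: "f \<in> zspan G \<Longrightarrow> h \<in> zspan G \<Longrightarrow> (\<lambda>x. f x + h x) \<in> zspan G"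
| zspan_neg: "f \<in> zspan G \<Longrightarrow> (\<lambda>x. - f x) \<in> zspan G"

text \<open>Finitely supported integer combinations of the symbols (n, r, e) with e \<in> M;
  the symbol (n, r, e) represents r x^n \<otimes> e in \<Phi>(M) = R[x,f] \<otimes>_R M.\<close>
definition free_Phi :: "'c set \<Rightarrow> (nat \<times> 'a \<times> 'c \<Rightarrow> int) set" where
  "free_Phi M = {f. finite {z. f z \<noteq> 0} \<and> (\<forall>n r e. f (n, r, e) \<noteq> 0 \<longrightarrow> e \<in> M)}"

text \<open>Defining relations of the tensor products R x^n \<otimes>_R M, where R x^n is an
  R-bimodule with (r x^n) s = r s^(p^n) x^n.\<close>
definition Phi_rels :: "nat \<Rightarrow> 'c set \<Rightarrow> ('c \<Rightarrow> 'c \<Rightarrow> 'c) \<Rightarrow> ('a::comm_ring_1 \<Rightarrow> 'c \<Rightarrow> 'c)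
    \<Rightarrow> (nat \<times> 'a \<times> 'c \<Rightarrow> int) set" where
  "Phi_rels p M add smul =
     {(\<lambda>z. delta (n, r + r', e) z - delta (n, r, e) z - delta (n, r', e) z) | n r r' e. e \<in> M}
   \<union> {(\<lambda>z. delta (n, r, add e e') z - delta (n, r, e) z - delta (n, r, e') z) | n r e e'. e \<in> M \<and> e' \<in> M}
   \<union> {(\<lambda>z. delta (n, r * s ^ (p ^ n), e) z - delta (n, r, smul s e) z) | n r s e. e \<in> M}"

text \<open>Kernel of the presentation: a representative is zero in \<Phi>(M) iff it lies here.\<close>
definition Phi_zero :: "nat \<Rightarrow> 'c set \<Rightarrow> ('c \<Rightarrow> 'c \<Rightarrow> 'c) \<Rightarrow> ('a::comm_ring_1 \<Rightarrow> 'c \<Rightarrow> 'c)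
    \<Rightarrow> (nat \<times> 'a \<times> 'c \<Rightarrow> int) set" where
  "Phi_zero p M add smul = zspan (Phi_rels p M add smul)"

definition lin_map :: "('x \<Rightarrow> 'y) \<Rightarrow> ('x \<Rightarrow> int) \<Rightarrow> 'y \<Rightarrow> int" where
  "lin_map g f = (\<lambda>y. \<Sum>z\<in>{z. f z \<noteq> 0 \<and> g z = y}. f z)"

definition Phi_smul :: "'a::comm_ring_1 \<Rightarrow> (nat \<times> 'a \<times> 'c \<Rightarrow> int) \<Rightarrow> (nat \<times> 'a \<times> 'c \<Rightarrow> int)" where
  "Phi_smul s = lin_map (\<lambda>(n, r, e). (n, s * r, e))"

definition Phi_xact :: "nat \<Rightarrow> (nat \<times> 'a::comm_ring_1 \<times> 'c \<Rightarrow> int) \<Rightarrow> (nat \<times> 'a \<times> 'c \<Rightarrow> int)" where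
  "Phi_xact p = lin_map (\<lambda>(n, r, e). (Suc n, r ^ p, e))"

text \<open>Preimages of R[x,f]-submodules of \<Phi>(M) in the free group (they contain the kernel).\<close>
definition Phi_submodule_rep :: "nat \<Rightarrow> 'c set \<Rightarrow> ('c \<Rightarrow> 'c \<Rightarrow> 'c) \<Rightarrow> ('a::comm_ring_1 \<Rightarrow> 'c \<Rightarrow> 'c)
    \<Rightarrow> (nat \<times> 'a \<times> 'c \<Rightarrow> int) set \<Rightarrow> bool" where
  "Phi_submodule_rep p M add smul N \<longleftrightarrow>
     N \<subseteq> free_Phi M \<and> Phi_zero p M add smul \<subseteq> N \<and>
     (\<forall>f\<in>N. \<forall>h\<in>N. (\<lambda>z. f z + h z) \<in> N) \<and> (\<forall>f\<in>N. (\<lambda>z. - f z) \<in> N) \<and>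
     (\<forall>s. \<forall>f\<in>N. Phi_smul s f \<in> N) \<and> (\<forall>f\<in>N. Phi_xact p f \<in> N)"

text \<open>a is \<Phi>(E)-special: a = (0 :_R N) for some R[x,f]-submodule N of \<Phi>(E).\<close>
definition Phi_special :: "nat \<Rightarrow> 'c set \<Rightarrow> ('c \<Rightarrow> 'c \<Rightarrow> 'c) \<Rightarrow> ('a::comm_ring_1 \<Rightarrow> 'c \<Rightarrow> 'c)
    \<Rightarrow> 'a set \<Rightarrow> bool" where
  "Phi_special p M add smul \<aa> \<longleftrightarrow>
     (\<exists>N. Phi_submodule_rep p M add smul N \<and>
          \<aa> = {s. \<forall>f\<in>N. Phi_smul s f \<in> Phi_zero p M add smul})"

text \<open>(ann_{\<Phi>(E)}(a R[x,f]))_0, viewed inside E via e \<mapsto> 1 \<otimes> e: those e with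
  r x^n \<otimes> e = 0 in R x^n \<otimes> E for all r \<in> a and n \<ge> 0.\<close>
definition Phi_ann0 :: "nat \<Rightarrow> 'c set \<Rightarrow> ('c \<Rightarrow> 'c \<Rightarrow> 'c) \<Rightarrow> ('a::comm_ring_1 \<Rightarrow> 'c \<Rightarrow> 'c)
    \<Rightarrow> 'a set \<Rightarrow> 'c set" where
  "Phi_ann0 p M add smul \<aa> =
     {e \<in> M. \<forall>n. \<forall>r\<in>\<aa>. delta (n, r, e) \<in> Phi_zero p M add smul}"

definition colon_mod :: "'c set \<Rightarrow> 'c \<Rightarrow> ('a::comm_ring_1 \<Rightarrow> 'c \<Rightarrow> 'c) \<Rightarrow> 'a set \<Rightarrow> 'c set" where
  "colon_mod M zero smul \<aa> = {e \<in> M. \<forall>r\<in>\<aa>. smul r e = zero}"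

text \<open>For every R-module M (carried by a subset of the type 'c), the map
  M \<rightarrow> R^(1) \<otimes>_R M, e \<mapsto> 1 \<otimes> e, is injective. R^(1) \<otimes>_R M is the degree-1
  part R x \<otimes>_R M of \<Phi>(M), and 1 \<otimes> e is represented by the symbol (1, 1, e).\<close>
definition F_pure :: "'a::comm_ring_1 itself \<Rightarrow> 'c itself \<Rightarrow> nat \<Rightarrow> bool" where
  "F_pure _ _ p \<longleftrightarrow>
     (\<forall>(M :: 'c set) add zero (smul :: 'a \<Rightarrow> 'c \<Rightarrow> 'c). is_rmodule M add zero smul \<longrightarrow>
        (\<forall>e\<in>M. delta (1, 1, e) \<in> Phi_zero p M add smul \<longrightarrow> e = zero))"

end

theory Submission
  imports Defs "HOL-Algebra.FiniteProduct"
begin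

text \<open>
  Let \<open>N = ann\<^sub>\<Phi>\<^sub>(\<^sub>E\<^sub>)(\<aa>R[x,f])\<close>. Its degree-0 component always lies in \<open>(0 :\<^sub>E \<aa>)\<close>,
  because the degree-0 part \<open>R \<otimes>\<^sub>R E\<close> of \<open>\<Phi>(E)\<close> is \<open>E\<close> itself; so the hypothesis
  \<open>(0 :\<^sub>E \<aa>) \<subseteq> N\<^sub>0\<close> is the same as \<open>N\<^sub>0 = (0 :\<^sub>E \<aa>)\<close>. Under it, \<open>\<aa>\<close> is the
  annihilator of \<open>N\<close>: clearly \<open>\<aa> N = 0\<close>, and if \<open>s \<notin> \<aa>\<close>, then since \<open>E\<close> is an injective
  hull of the residue field there is \<open>e \<in> (0 :\<^sub>E \<aa>)\<close> with \<open>s e \<noteq> 0\<close>; then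
  \<open>1 \<otimes> e \<in> N\<close> is not killed by \<open>s\<close>.
\<close>

lemma freshmans_dream_prime_power:
  fixes x y :: "'a::comm_ring_1"
  assumes "prime p" and "of_nat p = (0::'a)"
  shows "(x + y) ^ (p ^ k) = x ^ (p ^ k) + y ^ (p ^ k)"
proof (cases "CHAR('a) = 1")
  case True
  then have "(1::'a) = 0" using of_nat_CHAR[where 'a='a] by simp
  then show ?thesis by (metis mult_1 mult_zero_left)
next
  case False
  have "CHAR('a) dvd p" using assms(2) by (simp add: of_nat_eq_0_iff_char_dvd)
  then have "CHAR('a) = p" using False assms(1) prime_nat_iff by auto
  then show ?thesis using assms(1) by (intro freshmans_dream') simp_all
qed

lemma is_ideal_adjoin:
  assumes "is_ideal \<aa>"
  shows "is_ideal {r * s + a | r a. a \<in> \<aa>}"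
  unfolding is_ideal_def
proof (intro conjI ballI allI)
  show "0 \<in> {r * s + a | r a. a \<in> \<aa>}"
  proof -
    have "0 = 0 * s + 0" by simp
    then show ?thesis using assms unfolding is_ideal_def by blast
  qed
next
  fix x y assume "x \<in> {r * s + a | r a. a \<in> \<aa>}" "y \<in> {r * s + a | r a. a \<in> \<aa>}"
  then obtain r a r' a' where "x = r * s + a" "y = r' * s + a'" and a: "a \<in> \<aa>" "a' \<in> \<aa>"
    by blast
  then have "x + y = (r + r') * s + (a + a')" by (simp add: algebra_simps)
  moreover have "a + a' \<in> \<aa>" using assms a unfolding is_ideal_def by blast
  ultimately show "x + y \<in> {r * s + a | r a. a \<in> \<aa>}" by blast
next
  fix t x assume "x \<in> {r * s + a | r a. a \<in> \<aa>}"
  then obtain r a where "x = r * s + a" and a: "a \<in> \<aa>" by blast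
  then have "t * x = (t * r) * s + t * a" by (simp add: algebra_simps)
  moreover have "t * a \<in> \<aa>" using assms a unfolding is_ideal_def by blast
  ultimately show "t * x \<in> {r * s + a | r a. a \<in> \<aa>}" by blast
qed

lemma local_ring_max_colon_subset:
  assumes "local_ring_max m" and "is_ideal \<aa>" and "s \<notin> \<aa>" and "r * s \<in> \<aa>"
  shows "r \<in> m"
proof (rule ccontr)
  assume "r \<notin> m"
  then obtain y where "r * y = 1" using assms(1) unfolding local_ring_max_def by blast
  then have "s = y * (r * s)" by (metis mult.assoc mult.commute mult_1)
  moreover have "y * (r * s) \<in> \<aa>" using assms(2,4) unfolding is_ideal_def by blast
  ultimately show False using assms(3) by simp
qed

locale rmodule =
  fixes E :: "'b set" and add :: "'b \<Rightarrow> 'b \<Rightarrow> 'b" and zero :: 'b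
    and smul :: "'a::comm_ring_1 \<Rightarrow> 'b \<Rightarrow> 'b"
  assumes is_rmodule: "is_rmodule E add zero smul"
begin

lemma zero_closed: "zero \<in> E"
  and add_closed: "x \<in> E \<Longrightarrow> y \<in> E \<Longrightarrow> add x y \<in> E"
  and smul_closed: "x \<in> E \<Longrightarrow> smul r x \<in> E"
  and add_assoc: "x \<in> E \<Longrightarrow> y \<in> E \<Longrightarrow> z \<in> E \<Longrightarrow> add (add x y) z = add x (add y z)"
  and add_commute: "x \<in> E \<Longrightarrow> y \<in> E \<Longrightarrow> add x y = add y x"
  and add_zero_left: "x \<in> E \<Longrightarrow> add zero x = x"
  and smul_add: "x \<in> E \<Longrightarrow> y \<in> E \<Longrightarrow> smul r (add x y) = add (smul r x) (smul r y)"
  and add_smul: "x \<in> E \<Longrightarrow> smul (r + s) x = add (smul r x) (smul s x)"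
  and smul_smul: "x \<in> E \<Longrightarrow> smul (r * s) x = smul r (smul s x)"
  and smul_one: "x \<in> E \<Longrightarrow> smul 1 x = x"
  using is_rmodule unfolding is_rmodule_def by auto

lemma add_inverse_exists: "x \<in> E \<Longrightarrow> \<exists>y\<in>E. add x y = zero"
  using is_rmodule unfolding is_rmodule_def by (elim conjE) blast

lemma add_zero_right: "x \<in> E \<Longrightarrow> add x zero = x"
  using add_zero_left add_commute zero_closed by metis

lemma add_left_cancel:
  assumes "a \<in> E" "b \<in> E" "c \<in> E" and "add a b = add a c"
  shows "b = c"
proof -
  obtain y where y: "y \<in> E" "add a y = zero" using add_inverse_exists assms(1) by blast
  have "b = add (add y a) b" using y assms add_commute add_zero_left by metis
  also have "\<dots> = add (add y a) c" using assms y add_assoc by metis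
  also have "\<dots> = c" using y assms add_commute add_zero_left by metis
  finally show ?thesis .
qed

lemma smul_zero_left: "x \<in> E \<Longrightarrow> smul 0 x = zero"
  using add_left_cancel[of "smul 0 x" "smul 0 x" zero] add_smul[of x 0 0]
    add_zero_right smul_closed zero_closed by simp

lemma smul_residue_well_defined:
  assumes "local_ring_max m" and "is_ideal \<aa>" and "s \<notin> \<aa>"
    and u: "u \<in> E" "{r. smul r u = zero} = m"
    and eq: "r * s + a = r' * s + a'" and "a \<in> \<aa>" "a' \<in> \<aa>"
  shows "smul r u = smul r' u"
proof -
  have "(r - r') * s = a' + (- 1) * a" using eq by (simp add: algebra_simps)
  moreover have "a' + (- 1) * a \<in> \<aa>" using assms(2,7,8) unfolding is_ideal_def by blast
  ultimately have "(r - r') * s \<in> \<aa>" by simp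
  then have "r - r' \<in> m" using local_ring_max_colon_subset assms(1-3) by blast
  then have "smul (r - r') u = zero" using u by blast
  have "smul r u = smul (r' + (r - r')) u" by simp
  also have "\<dots> = add (smul r' u) (smul (r - r') u)" by (rule add_smul[OF u(1)])
  also have "\<dots> = smul r' u"
    using \<open>smul (r - r') u = zero\<close> add_zero_right smul_closed u(1) by simp
  finally show ?thesis .
qed

lemma injective_module_extend_residue_map:
  assumes loc: "local_ring_max m" and inj: "injective_module E add zero smul"
    and \<aa>: "is_ideal \<aa>" and s: "s \<notin> \<aa>"
    and u: "u \<in> E" "{r. smul r u = zero} = m"
  obtains e where "e \<in> E" and "\<And>r a. a \<in> \<aa> \<Longrightarrow> smul (r * s + a) e = smul r u"
proof -
  define I where "I = {r * s + a | r a. a \<in> \<aa>}"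
  define g where "g x = smul (SOME r. \<exists>a\<in>\<aa>. x = r * s + a) u" for x
  have g: "g (r * s + a) = smul r u" if "a \<in> \<aa>" for r a
  proof -
    have "\<exists>r'. \<exists>a'\<in>\<aa>. r * s + a = r' * s + a'" using that by blast
    from someI_ex[OF this] show ?thesis
      unfolding g_def using smul_residue_well_defined[OF loc \<aa> s u] that by metis
  qed
  have \<aa>_add: "a + a' \<in> \<aa>" if "a \<in> \<aa>" "a' \<in> \<aa>" for a a'
    using \<aa> that unfolding is_ideal_def by blast
  have \<aa>_mult: "t * a \<in> \<aa>" if "a \<in> \<aa>" for a t
    using \<aa> that unfolding is_ideal_def by blast
  have "is_ideal I" unfolding I_def by (rule is_ideal_adjoin[OF \<aa>])
  moreover have "\<forall>x\<in>I. g x \<in> E"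
    unfolding I_def using g smul_closed[OF u(1)] by auto
  moreover have "\<forall>x\<in>I. \<forall>y\<in>I. g (x + y) = add (g x) (g y)"
  proof (intro ballI)
    fix x y assume "x \<in> I" "y \<in> I"
    then obtain r a r' a' where "x = r * s + a" "y = r' * s + a'" "a \<in> \<aa>" "a' \<in> \<aa>"
      unfolding I_def by blast
    then have "x + y = (r + r') * s + (a + a')" by (simp add: algebra_simps)
    then have "g (x + y) = smul (r + r') u" using g \<aa>_add \<open>a \<in> \<aa>\<close> \<open>a' \<in> \<aa>\<close> by simp
    then show "g (x + y) = add (g x) (g y)"
      using g \<open>x = r * s + a\<close> \<open>y = r' * s + a'\<close> \<open>a \<in> \<aa>\<close> \<open>a' \<in> \<aa>\<close> add_smul[OF u(1)]
      by simp
  qed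
  moreover have "\<forall>t. \<forall>x\<in>I. g (t * x) = smul t (g x)"
  proof (intro allI ballI)
    fix t x assume "x \<in> I"
    then obtain r a where "x = r * s + a" "a \<in> \<aa>" unfolding I_def by blast
    then have "t * x = (t * r) * s + t * a" by (simp add: algebra_simps)
    then have "g (t * x) = smul (t * r) u" using g \<aa>_mult \<open>a \<in> \<aa>\<close> by simp
    then show "g (t * x) = smul t (g x)"
      using g \<open>x = r * s + a\<close> \<open>a \<in> \<aa>\<close> smul_smul[OF u(1)] by simp
  qed
  ultimately obtain e where e: "e \<in> E" "\<forall>x\<in>I. g x = smul x e"
    using inj unfolding injective_module_def by blast
  have "smul (r * s + a) e = smul r u" if "a \<in> \<aa>" for r a
  proof -
    have "r * s + a \<in> I" using that unfolding I_def by blast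
    then have "g (r * s + a) = smul (r * s + a) e" using e(2) by blast
    then show ?thesis using g[OF that] by simp
  qed
  with e(1) show thesis by (rule that)
qed

lemma injective_hull_residue_separates:
  assumes loc: "local_ring_max m" and hull: "injective_hull_residue m E add zero smul"
    and \<aa>: "is_ideal \<aa>" and s: "s \<notin> \<aa>"
  shows "\<exists>e\<in>colon_mod E zero smul \<aa>. smul s e \<noteq> zero"
proof -
  from hull obtain u where u: "u \<in> E" "{r. smul r u = zero} = m"
    and inj: "injective_module E add zero smul"
    unfolding injective_hull_residue_def by blast
  obtain e where e: "e \<in> E" "\<And>r a. a \<in> \<aa> \<Longrightarrow> smul (r * s + a) e = smul r u"
    using injective_module_extend_residue_map[OF loc inj \<aa> s u] by metis
  have "smul a e = zero" if "a \<in> \<aa>" for a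
    using e(2)[OF that, of 0] smul_zero_left[OF u(1)] by simp
  then have "e \<in> colon_mod E zero smul \<aa>" using e(1) unfolding colon_mod_def by blast
  moreover have "smul s e = u"
  proof -
    have "0 \<in> \<aa>" using \<aa> unfolding is_ideal_def by blast
    then show ?thesis using e(2)[of 0 1] smul_one[OF u(1)] by simp
  qed
  moreover have "u \<noteq> zero"
    using loc u smul_one[OF u(1)] unfolding local_ring_max_def by auto
  ultimately show ?thesis by blast
qed

end

definition supp :: "('x \<Rightarrow> int) \<Rightarrow> 'x set" where
  "supp f = {z. f z \<noteq> 0}"

lemma finite_supp_delta: "finite (supp (delta a))"
  by (rule finite_subset[of _ "{a}"]) (auto simp: supp_def delta_def)

lemma finite_supp_add:
  "finite (supp f) \<Longrightarrow> finite (supp h) \<Longrightarrow> finite (supp (\<lambda>z. f z + h z))"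
  by (rule finite_subset[of _ "supp f \<union> supp h"]) (auto simp: supp_def)

lemma supp_uminus [simp]: "supp (\<lambda>z. - f z) = supp f"
  by (simp add: supp_def)

lemma finite_supp_diff:
  "finite (supp f) \<Longrightarrow> finite (supp h) \<Longrightarrow> finite (supp (\<lambda>z. f z - h z))"
  by (rule finite_subset[of _ "supp f \<union> supp h"]) (auto simp: supp_def)

lemma lin_map_eq_sum:
  assumes "finite A" and "supp f \<subseteq> A"
  shows "lin_map g f y = (\<Sum>z\<in>{z\<in>A. g z = y}. f z)"
  unfolding lin_map_def
  by (rule sum.mono_neutral_left) (use assms in \<open>auto simp: supp_def\<close>)

lemma lin_map_add:
  assumes "finite (supp f)" and "finite (supp h)"
  shows "lin_map g (\<lambda>z. f z + h z) = (\<lambda>y. lin_map g f y + lin_map g h y)"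
proof
  fix y
  let ?A = "supp f \<union> supp h"
  have fin: "finite ?A" using assms by simp
  have "lin_map g (\<lambda>z. f z + h z) y = (\<Sum>z\<in>{z\<in>?A. g z = y}. f z + h z)"
    by (rule lin_map_eq_sum[OF fin]) (auto simp: supp_def)
  also have "\<dots> = (\<Sum>z\<in>{z\<in>?A. g z = y}. f z) + (\<Sum>z\<in>{z\<in>?A. g z = y}. h z)"
    by (rule sum.distrib)
  also have "\<dots> = lin_map g f y + lin_map g h y"
    using lin_map_eq_sum[OF fin, of f g y] lin_map_eq_sum[OF fin, of h g y] by simp
  finally show "lin_map g (\<lambda>z. f z + h z) y = lin_map g f y + lin_map g h y" .
qed

lemma lin_map_uminus: "lin_map g (\<lambda>z. - f z) = (\<lambda>y. - lin_map g f y)"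
  by (simp add: fun_eq_iff lin_map_def sum_negf)

lemma lin_map_diff:
  assumes "finite (supp f)" and "finite (supp h)"
  shows "lin_map g (\<lambda>z. f z - h z) = (\<lambda>y. lin_map g f y - lin_map g h y)"
  using lin_map_add[of f "\<lambda>z. - h z" g] assms by (simp add: lin_map_uminus)

lemma lin_map_zero: "lin_map g (\<lambda>z. 0) = (\<lambda>y. 0)"
  unfolding lin_map_def by simp

lemma lin_map_delta: "lin_map g (delta a) = delta (g a)"
proof
  fix y
  have "{z. delta a z \<noteq> 0 \<and> g z = y} = (if g a = y then {a} else {})"
    by (auto simp: delta_def)
  then show "lin_map g (delta a) y = delta (g a) y"
    unfolding lin_map_def by (simp add: delta_def)
qed

lemma supp_lin_map: "supp (lin_map g f) \<subseteq> g ` supp f"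
proof
  fix y assume "y \<in> supp (lin_map g f)"
  then have "{z. f z \<noteq> 0 \<and> g z = y} \<noteq> {}" unfolding supp_def lin_map_def by force
  then show "y \<in> g ` supp f" unfolding supp_def by blast
qed

lemma finite_supp_lin_map: "finite (supp f) \<Longrightarrow> finite (supp (lin_map g f))"
  by (rule finite_subset[OF supp_lin_map]) simp

lemma lin_map_comp:
  assumes fin: "finite (supp f)"
  shows "lin_map g1 (lin_map g2 f) = lin_map (g1 \<circ> g2) f"
proof
  fix y
  let ?S = "supp f" and ?B = "g2 ` supp f"
  have "finite ?B" using fin by simp
  then have "lin_map g1 (lin_map g2 f) y = (\<Sum>w\<in>{w\<in>?B. g1 w = y}. lin_map g2 f w)"
    by (rule lin_map_eq_sum[OF _ supp_lin_map])
  also have "\<dots> = (\<Sum>w\<in>{w\<in>?B. g1 w = y}. \<Sum>z\<in>{z\<in>?S. g2 z = w}. f z)"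
    by (rule sum.cong) (auto intro: lin_map_eq_sum[OF fin])
  also have "\<dots> = (\<Sum>w\<in>{w\<in>?B. g1 w = y}. \<Sum>z\<in>{z\<in>{z\<in>?S. g1 (g2 z) = y}. g2 z = w}. f z)"
    by (intro sum.cong refl arg_cong[where f="sum f"]) auto
  also have "\<dots> = (\<Sum>z\<in>{z\<in>?S. g1 (g2 z) = y}. f z)"
    by (rule sum.group) (use fin \<open>finite ?B\<close> in auto)
  also have "\<dots> = lin_map (g1 \<circ> g2) f y"
    using lin_map_eq_sum[OF fin order_refl, of "g1 \<circ> g2" y] by simp
  finally show "lin_map g1 (lin_map g2 f) y = lin_map (g1 \<circ> g2) f y" .
qed

lemma finite_supp_zspan:
  assumes "\<And>g. g \<in> G \<Longrightarrow> finite (supp g)" and "f \<in> zspan G"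
  shows "finite (supp f)"
  using assms(2)
  by induction (auto simp: supp_def assms[unfolded supp_def] intro: finite_supp_add[unfolded supp_def])

lemma lin_map_zspan:
  assumes "\<And>x. x \<in> G \<Longrightarrow> lin_map g x \<in> zspan H"
    and "\<And>x. x \<in> G \<Longrightarrow> finite (supp x)"
    and "f \<in> zspan G"
  shows "lin_map g f \<in> zspan H"
  using assms(3)
proof induction
  case zspan_zero
  then show ?case by (simp add: lin_map_zero zspan.zspan_zero)
next
  case (zspan_gen x)
  then show ?case by (rule assms(1))
next
  case (zspan_add f h)
  then show ?case
    using finite_supp_zspan[OF assms(2)] by (simp add: lin_map_add zspan.zspan_add)
next
  case (zspan_neg f)
  then show ?case by (simp add: lin_map_uminus zspan.zspan_neg)
qed

lemma Phi_rels_addI: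
  "e \<in> M \<Longrightarrow> (\<lambda>z. delta (n, r + r', e) z - delta (n, r, e) z - delta (n, r', e) z) \<in> Phi_rels p M add smul"
  and Phi_rels_tensor_addI: "e \<in> M \<Longrightarrow> e' \<in> M \<Longrightarrow>
    (\<lambda>z. delta (n, r, add e e') z - delta (n, r, e) z - delta (n, r, e') z) \<in> Phi_rels p M add smul"
  and Phi_rels_balancedI:
  "e \<in> M \<Longrightarrow> (\<lambda>z. delta (n, r * s ^ (p ^ n), e) z - delta (n, r, smul s e) z) \<in> Phi_rels p M add smul"
  unfolding Phi_rels_def by blast+

lemma Phi_relsE:
  assumes "x \<in> Phi_rels p M add smul"
  obtains n r r' e where "e \<in> M" "x = (\<lambda>z. delta (n, r + r', e) z - delta (n, r, e) z - delta (n, r', e) z)"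
  | n r e e' where "e \<in> M" "e' \<in> M"
      "x = (\<lambda>z. delta (n, r, add e e') z - delta (n, r, e) z - delta (n, r, e') z)"
  | n r s e where "e \<in> M" "x = (\<lambda>z. delta (n, r * s ^ (p ^ n), e) z - delta (n, r, smul s e) z)"
  using assms unfolding Phi_rels_def by blast

lemma finite_supp_Phi_rels: "x \<in> Phi_rels p M add smul \<Longrightarrow> finite (supp x)"
  by (erule Phi_relsE) (simp_all add: finite_supp_diff finite_supp_delta)

lemma finite_supp_Phi_zero: "f \<in> Phi_zero p M add smul \<Longrightarrow> finite (supp f)"
  unfolding Phi_zero_def by (rule finite_supp_zspan[OF finite_supp_Phi_rels])

text \<open>Left multiplication by \<open>c x^k\<close> on \<open>\<Phi>(M)\<close>: since \<open>x r = r^p x\<close> in \<open>R[x,f]\<close>,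
  \<open>c x^k \<cdot> (r x^n \<otimes> e) = c r^(p^k) x^(n+k) \<otimes> e\<close>.\<close>
definition Phi_monomial_mult ::
    "nat \<Rightarrow> 'a::comm_ring_1 \<Rightarrow> nat \<Rightarrow> (nat \<times> 'a \<times> 'c \<Rightarrow> int) \<Rightarrow> (nat \<times> 'a \<times> 'c \<Rightarrow> int)" where
  "Phi_monomial_mult p c k = lin_map (\<lambda>(n, r, e). (n + k, c * r ^ (p ^ k), e))"

lemma Phi_smul_eq_monomial_mult: "Phi_smul s = Phi_monomial_mult p s 0"
  by (simp add: Phi_smul_def Phi_monomial_mult_def)

lemma Phi_xact_eq_monomial_mult: "Phi_xact p = Phi_monomial_mult p 1 1"
  by (simp add: Phi_xact_def Phi_monomial_mult_def)

lemma Phi_monomial_mult_delta: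
  "Phi_monomial_mult p c k (delta (n, r, e)) = delta (n + k, c * r ^ (p ^ k), e)"
  by (simp add: Phi_monomial_mult_def lin_map_delta)

lemma Phi_monomial_mult_mult:
  fixes f :: "nat \<times> 'a::comm_ring_1 \<times> 'c \<Rightarrow> int"
  assumes "finite (supp f)"
  shows "Phi_monomial_mult p c k (Phi_monomial_mult p d l f)
    = Phi_monomial_mult p (c * d ^ (p ^ k)) (l + k) f"
proof -
  have "(\<lambda>(n, r, e). (n + k, c * r ^ (p ^ k), e)) \<circ> (\<lambda>(n, r, e). (n + l, d * r ^ (p ^ l), e))
      = ((\<lambda>(n, r, e). (n + (l + k), c * d ^ (p ^ k) * r ^ (p ^ (l + k)), e)) :: nat \<times> 'a \<times> 'c \<Rightarrow> _)"
  proof -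
    have "c * (d * r ^ p ^ l) ^ p ^ k = c * d ^ p ^ k * r ^ p ^ (l + k)" for r :: 'a
      by (simp add: power_mult_distrib power_add mult.assoc flip: power_mult)
    then show ?thesis by (auto simp: fun_eq_iff)
  qed
  then show ?thesis unfolding Phi_monomial_mult_def lin_map_comp[OF assms] by (simp only:)
qed

lemma Phi_monomial_mult_Phi_rels:
  assumes "prime p" and "of_nat p = (0::'a::comm_ring_1)"
    and "x \<in> Phi_rels p M add (smul :: 'a \<Rightarrow> _)"
  shows "Phi_monomial_mult p c k x \<in> Phi_rels p M add smul"
  using assms(3)
proof (cases rule: Phi_relsE)
  case (1 n r r' e)
  have "c * (r + r') ^ (p ^ k) = c * r ^ (p ^ k) + c * r' ^ (p ^ k)"
    using freshmans_dream_prime_power[OF assms(1,2), of r r' k] by (simp add: distrib_left)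
  then show ?thesis using 1 Phi_rels_addI[of e M "n + k"]
    by (simp add: Phi_monomial_mult_def lin_map_diff finite_supp_diff finite_supp_delta lin_map_delta)
next
  case (2 n r e e')
  then show ?thesis using Phi_rels_tensor_addI[of e M e' "n + k"]
    by (simp add: Phi_monomial_mult_def lin_map_diff finite_supp_diff finite_supp_delta lin_map_delta)
next
  case (3 n r s e)
  have "c * (r * s ^ (p ^ n)) ^ (p ^ k) = c * r ^ (p ^ k) * s ^ (p ^ (n + k))"
    by (simp add: power_mult_distrib power_add mult.assoc flip: power_mult)
  then show ?thesis using 3 Phi_rels_balancedI[of e M "n + k" "c * r ^ (p ^ k)" s p smul]
    by (simp add: Phi_monomial_mult_def lin_map_diff finite_supp_delta lin_map_delta)
qed

lemma Phi_monomial_mult_Phi_zero: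
  assumes "prime p" and "of_nat p = (0::'a::comm_ring_1)"
    and "f \<in> Phi_zero p M add (smul :: 'a \<Rightarrow> _)"
  shows "Phi_monomial_mult p c k f \<in> Phi_zero p M add smul"
proof -
  have rels: "lin_map (\<lambda>(n, r, e). (n + k, c * r ^ (p ^ k), e)) x \<in> zspan (Phi_rels p M add smul)"
    if "x \<in> Phi_rels p M add smul" for x
    using Phi_monomial_mult_Phi_rels[OF assms(1,2) that] unfolding Phi_monomial_mult_def
    by (rule zspan.zspan_gen)
  show ?thesis unfolding Phi_zero_def Phi_monomial_mult_def
    by (rule lin_map_zspan[OF rels finite_supp_Phi_rels assms(3)[unfolded Phi_zero_def]])
qed

lemma free_Phi_iff: "f \<in> free_Phi M \<longleftrightarrow> finite (supp f) \<and> (\<forall>z\<in>supp f. snd (snd z) \<in> M)"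
  unfolding free_Phi_def supp_def by force

lemma free_Phi_add:
  assumes "f \<in> free_Phi M" and "h \<in> free_Phi M"
  shows "(\<lambda>z. f z + h z) \<in> free_Phi M"
proof -
  have "supp (\<lambda>z. f z + h z) \<subseteq> supp f \<union> supp h" by (auto simp: supp_def)
  then show ?thesis using assms finite_supp_add unfolding free_Phi_iff by blast
qed

lemma free_Phi_uminus: "f \<in> free_Phi M \<Longrightarrow> (\<lambda>z. - f z) \<in> free_Phi M"
  unfolding free_Phi_iff by simp

lemma free_Phi_zero: "(\<lambda>z. 0) \<in> free_Phi M"
  unfolding free_Phi_iff by (simp add: supp_def)

lemma free_Phi_delta: "snd (snd a) \<in> M \<Longrightarrow> delta a \<in> free_Phi M"
  unfolding free_Phi_iff by (auto simp: finite_supp_delta supp_def delta_def split: if_splits)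

lemma free_Phi_diff: "f \<in> free_Phi M \<Longrightarrow> h \<in> free_Phi M \<Longrightarrow> (\<lambda>z. f z - h z) \<in> free_Phi M"
  using free_Phi_add[OF _ free_Phi_uminus, of f M h] by simp

lemma free_Phi_monomial_mult: "f \<in> free_Phi M \<Longrightarrow> Phi_monomial_mult p c k f \<in> free_Phi M"
  unfolding free_Phi_iff Phi_monomial_mult_def
  using supp_lin_map[of "\<lambda>(n, r, e). (n + k, c * r ^ (p ^ k), e)" f]
  by (fastforce simp: finite_supp_lin_map)

context rmodule
begin

lemma Phi_rels_subset_free_Phi: "Phi_rels p E add smul \<subseteq> free_Phi E"
  by (auto elim!: Phi_relsE intro!: free_Phi_diff free_Phi_delta add_closed smul_closed)

lemma Phi_zero_subset_free_Phi: "Phi_zero p E add smul \<subseteq> free_Phi E"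
proof
  fix f assume "f \<in> Phi_zero p E add smul"
  then show "f \<in> free_Phi E" unfolding Phi_zero_def
    by induction (use Phi_rels_subset_free_Phi in \<open>auto intro: free_Phi_zero free_Phi_add free_Phi_uminus\<close>)
qed

definition additive_group :: "'b monoid" where
  "additive_group = \<lparr>carrier = E, mult = add, one = zero\<rparr>"

lemma additive_group_simps [simp]:
  "carrier additive_group = E" "mult additive_group = add" "one additive_group = zero"
  by (simp_all add: additive_group_def)

lemma comm_group_additive_group: "comm_group additive_group"
proof (rule comm_groupI)
  fix x y z
  assume "x \<in> carrier additive_group" "y \<in> carrier additive_group" "z \<in> carrier additive_group"
  then show "x \<otimes>\<^bsub>additive_group\<^esub> y \<in> carrier additive_group"
    and "x \<otimes>\<^bsub>additive_group\<^esub> y \<otimes>\<^bsub>additive_group\<^esub> z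
      = x \<otimes>\<^bsub>additive_group\<^esub> (y \<otimes>\<^bsub>additive_group\<^esub> z)"
    and "x \<otimes>\<^bsub>additive_group\<^esub> y = y \<otimes>\<^bsub>additive_group\<^esub> x"
    and "\<one>\<^bsub>additive_group\<^esub> \<otimes>\<^bsub>additive_group\<^esub> x = x"
    and "\<exists>y\<in>carrier additive_group. y \<otimes>\<^bsub>additive_group\<^esub> x = \<one>\<^bsub>additive_group\<^esub>"
    using add_closed add_assoc add_commute add_zero_left add_inverse_exists by simp_all metis
qed (simp add: zero_closed)

text \<open>\<open>ev0\<close> realises the isomorphism \<open>R \<otimes>\<^sub>R E \<cong> E\<close>, \<open>r \<otimes> e \<mapsto> r e\<close>, on representatives,
  discarding the components of positive degree.\<close>
definition ev0_term :: "(nat \<times> 'a \<times> 'b \<Rightarrow> int) \<Rightarrow> nat \<times> 'a \<times> 'b \<Rightarrow> 'b" where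
  "ev0_term f z = (if snd (snd z) \<in> E then smul (of_int (f z) * fst (snd z)) (snd (snd z)) else zero)"

definition ev0 :: "(nat \<times> 'a \<times> 'b \<Rightarrow> int) \<Rightarrow> 'b" where
  "ev0 f = finprod additive_group (ev0_term f) {z \<in> supp f. fst z = 0}"

lemma ev0_term_closed: "ev0_term f z \<in> E"
  unfolding ev0_term_def using zero_closed smul_closed by simp

lemma ev0_term_zero: "f z = 0 \<Longrightarrow> ev0_term f z = zero"
  unfolding ev0_term_def using smul_zero_left by simp

lemma ev0_closed: "ev0 f \<in> E"
proof -
  interpret comm_group additive_group by (rule comm_group_additive_group)
  show ?thesis unfolding ev0_def using finprod_closed[of "ev0_term f"] ev0_term_closed by simp
qed

lemma ev0_eq_finprod:
  assumes "finite A" and "{z \<in> supp f. fst z = 0} \<subseteq> A" and "A \<subseteq> {z. fst z = 0}"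
  shows "ev0 f = finprod additive_group (ev0_term f) A"
proof -
  interpret comm_group additive_group by (rule comm_group_additive_group)
  show ?thesis unfolding ev0_def
    by (rule finprod_mono_neutral_cong_right[symmetric])
      (use assms ev0_term_closed ev0_term_zero in \<open>auto simp: supp_def\<close>)
qed

lemma ev0_add:
  assumes "finite (supp f)" and "finite (supp h)"
  shows "ev0 (\<lambda>z. f z + h z) = add (ev0 f) (ev0 h)"
proof -
  interpret comm_group additive_group by (rule comm_group_additive_group)
  let ?A = "{z \<in> supp f \<union> supp h. fst z = 0}"
  have A: "finite ?A" "?A \<subseteq> {z. fst z = 0}" using assms by auto
  have "ev0 (\<lambda>z. f z + h z) = finprod additive_group (ev0_term (\<lambda>z. f z + h z)) ?A"
    by (rule ev0_eq_finprod[OF A(1) _ A(2)]) (auto simp: supp_def)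
  also have "\<dots> = finprod additive_group (\<lambda>z. add (ev0_term f z) (ev0_term h z)) ?A"
    using add_smul add_zero_left zero_closed
    by (intro finprod_cong') (auto simp: ev0_term_def distrib_right add_closed smul_closed)
  also have "\<dots> = add (finprod additive_group (ev0_term f) ?A) (finprod additive_group (ev0_term h) ?A)"
    using finprod_multf[of "ev0_term f" ?A "ev0_term h"] ev0_term_closed by simp
  also have "\<dots> = add (ev0 f) (ev0 h)"
    using ev0_eq_finprod[OF A(1) _ A(2), of f] ev0_eq_finprod[OF A(1) _ A(2), of h]
    by (metis (no_types, lifting) Collect_mono UnI1 UnI2)
  finally show ?thesis .
qed

lemma ev0_zero: "ev0 (\<lambda>z. 0) = zero"
proof -
  interpret comm_group additive_group by (rule comm_group_additive_group)
  show ?thesis by (simp add: ev0_def supp_def)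
qed

lemma ev0_delta: "e \<in> E \<Longrightarrow> ev0 (delta (n, r, e)) = (if n = 0 then smul r e else zero)"
proof -
  interpret comm_group additive_group by (rule comm_group_additive_group)
  assume "e \<in> E"
  have "{z \<in> supp (delta (n, r, e)). fst z = 0} = (if n = 0 then {(n, r, e)} else {})"
    by (auto simp: supp_def delta_def)
  then show ?thesis
    using \<open>e \<in> E\<close> ev0_term_closed smul_closed add_zero_right
    by (simp add: ev0_def ev0_term_def delta_def)
qed

lemma ev0_diff_eq_zero:
  assumes "finite (supp f)" and "finite (supp h)" and "ev0 f = ev0 h"
  shows "ev0 (\<lambda>z. f z - h z) = zero"
proof (rule add_left_cancel[OF ev0_closed ev0_closed zero_closed])
  have "(\<lambda>z. h z + (f z - h z)) = f" by simp
  then have "add (ev0 h) (ev0 (\<lambda>z. f z - h z)) = ev0 f"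
    using ev0_add[OF assms(2) finite_supp_diff[OF assms(1,2)]] by simp
  then show "add (ev0 h) (ev0 (\<lambda>z. f z - h z)) = add (ev0 h) zero"
    using assms(3) add_zero_right ev0_closed by simp
qed

lemma ev0_Phi_rels: "x \<in> Phi_rels p E add smul \<Longrightarrow> ev0 x = zero"
proof (erule Phi_relsE)
  fix n r r' e assume e: "e \<in> E"
    and x: "x = (\<lambda>z. delta (n, r + r', e) z - delta (n, r, e) z - delta (n, r', e) z)"
  have "ev0 (delta (n, r + r', e)) = ev0 (\<lambda>z. delta (n, r, e) z + delta (n, r', e) z)"
    using ev0_add[OF finite_supp_delta finite_supp_delta] ev0_delta[OF e] add_smul[OF e]
      add_zero_left zero_closed by simp
  then show "ev0 x = zero" unfolding x diff_diff_eq
    by (intro ev0_diff_eq_zero finite_supp_delta finite_supp_add)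
next
  fix n r e e' assume e: "e \<in> E" "e' \<in> E"
    and x: "x = (\<lambda>z. delta (n, r, add e e') z - delta (n, r, e) z - delta (n, r, e') z)"
  have "ev0 (delta (n, r, add e e')) = ev0 (\<lambda>z. delta (n, r, e) z + delta (n, r, e') z)"
    using ev0_add[OF finite_supp_delta finite_supp_delta] ev0_delta e ev0_delta[OF add_closed[OF e]]
      smul_add[OF e] add_zero_left zero_closed by simp
  then show "ev0 x = zero" unfolding x diff_diff_eq
    by (intro ev0_diff_eq_zero finite_supp_delta finite_supp_add)
next
  fix n r s e assume e: "e \<in> E"
    and x: "x = (\<lambda>z. delta (n, r * s ^ (p ^ n), e) z - delta (n, r, smul s e) z)"
  have "ev0 (delta (n, r * s ^ (p ^ n), e)) = ev0 (delta (n, r, smul s e))"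
    using ev0_delta[OF e] ev0_delta[OF smul_closed[OF e]] smul_smul[OF e] by simp
  then show "ev0 x = zero" unfolding x
    by (intro ev0_diff_eq_zero finite_supp_delta)
qed

lemma ev0_Phi_zero:
  assumes "f \<in> Phi_zero p E add smul"
  shows "ev0 f = zero"
  using assms unfolding Phi_zero_def
proof induction
  case zspan_zero
  then show ?case by (rule ev0_zero)
next
  case (zspan_gen g)
  then show ?case by (rule ev0_Phi_rels)
next
  case (zspan_add f h)
  have "finite (supp f)" "finite (supp h)"
    using finite_supp_Phi_zero[unfolded Phi_zero_def, OF zspan_add.hyps(1)]
      finite_supp_Phi_zero[unfolded Phi_zero_def, OF zspan_add.hyps(2)] .
  then show ?case using zspan_add.IH ev0_add add_zero_left zero_closed by simp
next
  case (zspan_neg f)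
  have "finite (supp f)" using finite_supp_Phi_zero[unfolded Phi_zero_def, OF zspan_neg.hyps] .
  then have "ev0 (\<lambda>z. 0 - f z) = zero"
    by (intro ev0_diff_eq_zero) (simp_all add: supp_def ev0_zero zspan_neg.IH)
  then show ?case by simp
qed

lemma Phi_zero_degree0:
  assumes "e \<in> E" and "delta (0, s, e) \<in> Phi_zero p E add smul"
  shows "smul s e = zero"
  using ev0_Phi_zero[OF assms(2)] ev0_delta[OF assms(1), of 0 s] by simp

end

text \<open>Representatives of \<open>ann\<^sub>\<Phi>\<^sub>(\<^sub>M\<^sub>)(\<aa>R[x,f])\<close>: \<open>\<aa>R[x,f]\<close> is spanned by the monomials \<open>r x\<^sup>k\<close>, \<open>r \<in> \<aa>\<close>.\<close>
definition Phi_ann_rep :: "nat \<Rightarrow> 'c set \<Rightarrow> ('c \<Rightarrow> 'c \<Rightarrow> 'c) \<Rightarrow> ('a::comm_ring_1 \<Rightarrow> 'c \<Rightarrow> 'c)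
    \<Rightarrow> 'a set \<Rightarrow> (nat \<times> 'a \<times> 'c \<Rightarrow> int) set" where
  "Phi_ann_rep p M add smul \<aa> =
     {f \<in> free_Phi M. \<forall>r\<in>\<aa>. \<forall>k. Phi_monomial_mult p r k f \<in> Phi_zero p M add smul}"

lemma Phi_monomial_mult_add:
  "finite (supp f) \<Longrightarrow> finite (supp h) \<Longrightarrow>
    Phi_monomial_mult p c k (\<lambda>z. f z + h z) = (\<lambda>z. Phi_monomial_mult p c k f z + Phi_monomial_mult p c k h z)"
  unfolding Phi_monomial_mult_def by (rule lin_map_add)

lemma Phi_monomial_mult_uminus:
  "Phi_monomial_mult p c k (\<lambda>z. - f z) = (\<lambda>z. - Phi_monomial_mult p c k f z)"
  unfolding Phi_monomial_mult_def by (rule lin_map_uminus)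

context rmodule
begin

lemma Phi_submodule_rep_Phi_ann_rep:
  assumes p: "prime p" "of_nat p = (0::'a)" and \<aa>: "is_ideal \<aa>"
  shows "Phi_submodule_rep p E add smul (Phi_ann_rep p E add smul \<aa>)"
proof -
  let ?N = "Phi_ann_rep p E add smul \<aa>" and ?Z = "Phi_zero p E add smul"
  show ?thesis unfolding Phi_submodule_rep_def
proof (intro conjI ballI allI)
  show "?N \<subseteq> free_Phi E" unfolding Phi_ann_rep_def by blast
  show "?Z \<subseteq> ?N"
    using Phi_zero_subset_free_Phi Phi_monomial_mult_Phi_zero[OF p] unfolding Phi_ann_rep_def by blast
next
  fix f h assume f: "f \<in> ?N" and h: "h \<in> ?N"
  then have "finite (supp f)" "finite (supp h)" unfolding Phi_ann_rep_def free_Phi_iff by blast+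
  then have "Phi_monomial_mult p r k (\<lambda>z. f z + h z) \<in> ?Z" if "r \<in> \<aa>" for r k
    using f h that unfolding Phi_ann_rep_def Phi_zero_def
    by (simp add: Phi_monomial_mult_add zspan.zspan_add)
  moreover have "(\<lambda>z. f z + h z) \<in> free_Phi E"
    using f h free_Phi_add unfolding Phi_ann_rep_def by blast
  ultimately show "(\<lambda>z. f z + h z) \<in> ?N" unfolding Phi_ann_rep_def by blast
next
  fix f assume "f \<in> ?N"
  then show "(\<lambda>z. - f z) \<in> ?N"
    unfolding Phi_ann_rep_def Phi_zero_def
    by (auto simp: Phi_monomial_mult_uminus intro: free_Phi_uminus zspan.zspan_neg)
next
  fix s f assume f: "f \<in> ?N"
  then have fin: "finite (supp f)" unfolding Phi_ann_rep_def free_Phi_iff by blast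
  have "Phi_monomial_mult p r k (Phi_smul s f) \<in> ?Z" if "r \<in> \<aa>" for r k
  proof -
    have "s ^ (p ^ k) * r \<in> \<aa>" using \<aa> that unfolding is_ideal_def by blast
    then have "Phi_monomial_mult p (r * s ^ (p ^ k)) (0 + k) f \<in> ?Z"
      using f unfolding Phi_ann_rep_def by (simp add: mult.commute)
    then show ?thesis
      unfolding Phi_smul_eq_monomial_mult[of s p] Phi_monomial_mult_mult[OF fin] .
  qed
  moreover have "Phi_smul s f \<in> free_Phi E"
    using f free_Phi_monomial_mult unfolding Phi_ann_rep_def Phi_smul_eq_monomial_mult[of s p] by blast
  ultimately show "Phi_smul s f \<in> ?N" unfolding Phi_ann_rep_def by blast
next
  fix f assume f: "f \<in> ?N"
  then have fin: "finite (supp f)" unfolding Phi_ann_rep_def free_Phi_iff by blast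
  have "Phi_monomial_mult p r k (Phi_xact p f) \<in> ?Z" if "r \<in> \<aa>" for r k
  proof -
    have "Phi_monomial_mult p (r * 1 ^ (p ^ k)) (1 + k) f \<in> ?Z"
      using f that unfolding Phi_ann_rep_def by simp
    then show ?thesis
      unfolding Phi_xact_eq_monomial_mult Phi_monomial_mult_mult[OF fin] .
  qed
  moreover have "Phi_xact p f \<in> free_Phi E"
    using f free_Phi_monomial_mult unfolding Phi_ann_rep_def Phi_xact_eq_monomial_mult by blast
  ultimately show "Phi_xact p f \<in> ?N" unfolding Phi_ann_rep_def by blast
qed
qed

lemma Phi_ann0_subset_colon_mod: "Phi_ann0 p E add smul \<aa> \<subseteq> colon_mod E zero smul \<aa>"
  unfolding Phi_ann0_def colon_mod_def using Phi_zero_degree0 by blast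

lemma annihilator_Phi_ann_rep:
  assumes "local_ring_max m" and "injective_hull_residue m E add zero smul" and "is_ideal \<aa>"
    and colon: "colon_mod E zero smul \<aa> \<subseteq> Phi_ann0 p E add smul \<aa>"
  shows "\<aa> = {s. \<forall>f\<in>Phi_ann_rep p E add smul \<aa>. Phi_smul s f \<in> Phi_zero p E add smul}"
proof (intro equalityI subsetI CollectI ballI)
  fix s f assume "s \<in> \<aa>" "f \<in> Phi_ann_rep p E add smul \<aa>"
  then show "Phi_smul s f \<in> Phi_zero p E add smul"
    unfolding Phi_ann_rep_def Phi_smul_eq_monomial_mult[of s p] by blast
next
  fix s assume s: "s \<in> {s. \<forall>f\<in>Phi_ann_rep p E add smul \<aa>. Phi_smul s f \<in> Phi_zero p E add smul}"
  show "s \<in> \<aa>"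
  proof (rule ccontr)
    assume "s \<notin> \<aa>"
    then obtain e where e: "e \<in> colon_mod E zero smul \<aa>" "smul s e \<noteq> zero"
      using injective_hull_residue_separates assms(1-3) by blast
    then have "e \<in> E" unfolding colon_mod_def by blast
    have "delta (0, 1, e) \<in> Phi_ann_rep p E add smul \<aa>"
      using colon e(1) \<open>e \<in> E\<close>
      unfolding Phi_ann_rep_def Phi_ann0_def by (auto simp: Phi_monomial_mult_delta free_Phi_delta)
    moreover have "Phi_smul s (delta (0, 1, e)) = delta (0, s, e)"
      by (simp add: Phi_smul_def lin_map_delta)
    ultimately have "delta (0, s, e) \<in> Phi_zero p E add smul" using s by force
    then show False using Phi_zero_degree0 \<open>e \<in> E\<close> e(2) by blast
  qed
qed

end

theorem lemma1p1:
  fixes m :: "'a::comm_ring_1 set" and p :: nat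
    and E :: "'b set" and add :: "'b \<Rightarrow> 'b \<Rightarrow> 'b" and zero :: 'b and smul :: "'a \<Rightarrow> 'b \<Rightarrow> 'b"
    and \<aa> :: "'a set"
  assumes "noetherian_ring TYPE('a)"
    and "local_ring_max m"
    and "prime (p::nat)" and "of_nat p = (0::'a)"
    and "F_pure TYPE('a) TYPE('a list set) p"
    and "is_rmodule E add zero smul"
    and "injective_hull_residue m E add zero smul"
    and "is_ideal \<aa>"
  shows "colon_mod E zero smul \<aa> \<subseteq> Phi_ann0 p E add smul \<aa> \<longleftrightarrow>
         (Phi_special p E add smul \<aa> \<and> Phi_ann0 p E add smul \<aa> = colon_mod E zero smul \<aa>)"
proof
  interpret rmodule E add zero smul by (rule rmodule.intro) fact
  assume colon: "colon_mod E zero smul \<aa> \<subseteq> Phi_ann0 p E add smul \<aa>"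
  have "Phi_special p E add smul \<aa>"
    unfolding Phi_special_def
    using Phi_submodule_rep_Phi_ann_rep[OF assms(3,4,8)]
      annihilator_Phi_ann_rep[OF assms(2,7,8) colon] by blast
  moreover have "Phi_ann0 p E add smul \<aa> = colon_mod E zero smul \<aa>"
    using Phi_ann0_subset_colon_mod colon by blast
  ultimately show "Phi_special p E add smul \<aa> \<and> Phi_ann0 p E add smul \<aa> = colon_mod E zero smul \<aa>" ..
qed simp

end
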